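(* Let $0<s<1/2$ and $\beta:=2s-\tfrac32$. There is $C=C(s)$ such that for every $T>0$, every $\omega\in C([0,T];\ell^2_s(\mathbb Z))$ and every $t\in[0,T]$, $$\|\mathcal N[\omega](t)\|_{\ell^2_\beta}\le C\|\omega(t)\|_{\ell^2_s}^3 .$$
   Context: $\langle n\rangle=(1+n^2)^{1/2}$; $\ell^2_s(\mathbb Z)$ is the space of $\omega:\mathbb Z\to\mathbb C$ with $\|\omega\|_{\ell^2_s}:=\|\langle\cdot\rangle^s\omega\|_{\ell^2}<\infty$. For $\omega$ set $\omega^*(n):=\overline{\omega(-n)}$. Write $n_{ij\ldots}=n_i+n_j+\cdots$, $\hat n:=n-i\mathbf 1_{\{n=0\}}$. For integers with $n=n_{123}$ define $m_1:=2i\frac{n n_{23}}{\hat n_1\hat n_2}\mathbf 1_{\{n>0\}}\mathbf 1_{\{n_{23}<0\}}\mathbf 1_{\{n_3\neq0\}}$, $m_2:=2i\frac{n n_{23}}{\hat n_1\hat n_2}\mathbf 1_{\{n<0\}}\mathbf 1_{\{n_{23}>0\}}\mathbf 1_{\{n_3\neq0\}}$, $m_3:=2i\frac{n}{\hat n_1}\mathbf 1_{\{n<0\}}\mathbf 1_{\{n_2n_3\neq0\}}$ (all functions of $(n,n_1,n_2,n_3)$), $\tilde m_1:=m_1\mathbf 1_{\{n_{12}n_{13}\neq0\}}$, and $\Phi:=n|n|-n_1|n_1|-n_2|n_2|-n_3|n_3|$. For $\omega:[0,T]\to\ell^2_s$ and $t\in[0,T]$, $n\in\mathbb Z$, $$\mathcal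 N[\omega](t,n):=\sum_{n=n_{123}}e^{it\Phi}\big[\tilde m_1\,\omega(t,n_1)\omega(t,n_2)\omega^*(t,n_3)+m_2\,\omega(t,n_1)\omega^*(t,n_2)\omega(t,n_3)+m_3\,\omega^*(t,n_1)\omega(t,n_2)\omega(t,n_3)\big],$$ the sum being over $(n_1,n_2,n_3)\in\mathbb Z^3$ with $n_1+n_2+n_3=n$. *)

theory Defs
  imports "HOL-Analysis.Analysis"
begin

definition jbr :: "int \<Rightarrow> real" where
  "jbr n = sqrt (1 + (real_of_int n)^2)"

definition in_l2s :: "real \<Rightarrow> (int \<Rightarrow> complex) \<Rightarrow> bool" where
  "in_l2s s w \<longleftrightarrow> (\<lambda>n. (jbr n powr s * cmod (w n))^2) summable_on UNIV"

definition l2s_norm :: "real \<Rightarrow> (int \<Rightarrow> complex) \<Rightarrow> real" where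
  "l2s_norm s w = sqrt (\<Sum>\<^sub>\<infinity>n. (jbr n powr s * cmod (w n))^2)"

definition star :: "(int \<Rightarrow> complex) \<Rightarrow> int \<Rightarrow> complex" where
  "star w n = cnj (w (-n))"

definition hatn :: "int \<Rightarrow> complex" where
  "hatn n = of_int n - (if n = 0 then \<i> else 0)"

definition m1 :: "int \<Rightarrow> int \<Rightarrow> int \<Rightarrow> int \<Rightarrow> complex" where
  "m1 n n1 n2 n3 = (if n > 0 \<and> n2 + n3 < 0 \<and> n3 \<noteq> 0
     then 2 * \<i> * of_int n * of_int (n2 + n3) / (hatn n1 * hatn n2) else 0)"

definition m2 :: "int \<Rightarrow> int \<Rightarrow> int \<Rightarrow> int \<Rightarrow> complex" where
  "m2 n n1 n2 n3 = (if n < 0 \<and> n2 + n3 > 0 \<and> n3 \<noteq> 0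
     then 2 * \<i> * of_int n * of_int (n2 + n3) / (hatn n1 * hatn n2) else 0)"

definition m3 :: "int \<Rightarrow> int \<Rightarrow> int \<Rightarrow> int \<Rightarrow> complex" where
  "m3 n n1 n2 n3 = (if n < 0 \<and> n2 * n3 \<noteq> 0
     then 2 * \<i> * of_int n / hatn n1 else 0)"

definition m1t :: "int \<Rightarrow> int \<Rightarrow> int \<Rightarrow> int \<Rightarrow> complex" where
  "m1t n n1 n2 n3 = (if (n1 + n2) * (n1 + n3) \<noteq> 0 then m1 n n1 n2 n3 else 0)"

definition Phi :: "int \<Rightarrow> int \<Rightarrow> int \<Rightarrow> int \<Rightarrow> int" where
  "Phi n n1 n2 n3 = n * \<bar>n\<bar> - n1 * \<bar>n1\<bar> - n2 * \<bar>n2\<bar> - n3 * \<bar>n3\<bar>"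

definition NN :: "(real \<Rightarrow> int \<Rightarrow> complex) \<Rightarrow> real \<Rightarrow> int \<Rightarrow> complex" where
  "NN w t n = (\<Sum>\<^sub>\<infinity>(n1, n2, n3) \<in> {(n1, n2, n3). n1 + n2 + n3 = n}.
      exp (\<i> * of_real t * of_int (Phi n n1 n2 n3)) *
      (m1t n n1 n2 n3 * w t n1 * w t n2 * star (w t) n3
       + m2 n n1 n2 n3 * w t n1 * star (w t) n2 * w t n3
       + m3 n n1 n2 n3 * star (w t) n1 * w t n2 * w t n3))"

end

theory Submission
  imports Defs
begin

text \<open>
  On the support of \<open>m\<^sub>1\<close> and \<open>m\<^sub>2\<close> one has \<open>\<bar>n\<^sub>2\<^sub>3\<bar> \<le> \<bar>n\<^sub>1\<bar>\<close>, so every multiplier is bounded by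
  \<open>4\<bar>n\<bar>\<langle>n\<^sub>j\<rangle>\<^sup>-\<^sup>1\<close> for one of its frequencies \<open>n\<^sub>j\<close>. Hence \<open>|\<N>[\<omega>](n)|\<close> is bounded by \<open>4\<bar>n\<bar>\<close> times
  iterated convolutions \<open>a * (b\<langle>\<cdot>\<rangle>\<^sup>-\<^sup>1 * c)\<close> of \<open>|\<omega>|\<close> and \<open>|\<omega>\<^sup>*|\<close>, and the factor \<open>\<bar>n\<bar>\<close> is exactly the
  difference between the weights \<open>2s - 1/2\<close> and \<open>\<beta> = 2s - 3/2\<close>. The inner convolution stays in
  \<open>l\<^sup>2\<^sub>s\<close>, because \<open>\<langle>\<cdot>\<rangle>\<^sup>s\<close> is submultiplicative and \<open>\<Sum>\<langle>q\<rangle>\<^sup>-\<^sup>2 < \<infinity>\<close>. It remains to show that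
  convolution maps \<open>l\<^sup>2\<^sub>s \<times> l\<^sup>2\<^sub>s\<close> into \<open>l\<^sup>2\<close> with weight \<open>2s - 1/2\<close> when \<open>0 < s < 1/2\<close>. This is proved
  by duality: split the convolution according to which of the two frequencies dominates and apply
  a Schur test to each part, the kernel bound being
  \<open>\<Sum>\<^bsub>\<bar>r\<bar>\<le>\<bar>P\<bar>\<^esub> \<langle>P+r\<rangle>\<^sup>4\<^sup>s\<^sup>-\<^sup>1 \<langle>r\<rangle>\<^sup>-\<^sup>2\<^sup>s \<lesssim> \<langle>P\<rangle>\<^sup>2\<^sup>s\<close>.

  Sums of nonnegative terms are taken in \<open>ennreal\<close> over the counting measure, so that no
  summability side conditions arise; the duality argument is run on finite truncations, which
  keeps the dual quantity finite so that it can be cancelled.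
\<close>

section \<open>Sums over the integers\<close>

lemma nonneg_summable_on_of_nn_integral_finite:
  fixes f :: "'a \<Rightarrow> real"
  assumes nonneg: "\<And>x. 0 \<le> f x" and finite: "(\<integral>\<^sup>+x. f x \<partial>count_space UNIV) < \<infinity>"
  shows "f summable_on UNIV"
    and "infsum f UNIV = enn2real (\<integral>\<^sup>+x. f x \<partial>count_space UNIV)"
proof -
  have "integrable (count_space UNIV) f"
    using finite nonneg by (simp add: integrable_iff_bounded abs_of_nonneg)
  hence abs: "Infinite_Set_Sum.abs_summable_on f UNIV"
    by (simp add: Infinite_Set_Sum.abs_summable_on_def)
  hence "Infinite_Sum.abs_summable_on f UNIV" using abs_summable_equivalent by blast
  thus "f summable_on UNIV" using nonneg by (simp add: abs_of_nonneg)
  have "infsum f UNIV = infsetsum f UNIV" using infsetsum_infsum[OF abs] by simp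
  also have "\<dots> = enn2real (\<integral>\<^sup>+x. f x \<partial>count_space UNIV)"
    by (rule infsetsum_conv_nn_integral) (use finite nonneg in auto)
  finally show "infsum f UNIV = enn2real (\<integral>\<^sup>+x. f x \<partial>count_space UNIV)" .
qed

lemma nn_integral_count_space_eq_infsum:
  fixes f :: "'a \<Rightarrow> real"
  assumes nonneg: "\<And>x. 0 \<le> f x" and summable: "f summable_on UNIV"
  shows "(\<integral>\<^sup>+x. f x \<partial>count_space UNIV) = ennreal (infsum f UNIV)"
proof -
  have "Infinite_Sum.abs_summable_on f UNIV" using nonneg summable by (simp add: abs_of_nonneg)
  hence abs: "Infinite_Set_Sum.abs_summable_on f UNIV" using abs_summable_equivalent by blast
  have "(\<integral>\<^sup>+x. f x \<partial>count_space UNIV) = ennreal (infsetsum f UNIV)"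
    by (rule nn_integral_conv_infsetsum) (use nonneg abs in auto)
  also have "\<dots> = ennreal (infsum f UNIV)" using infsetsum_infsum[OF abs] by simp
  finally show ?thesis .
qed

lemma ennreal_norm_infsum_le_nn_integral:
  fixes g :: "'a \<Rightarrow> 'b::{banach, second_countable_topology}"
  shows "ennreal (norm (infsum g A)) \<le> (\<integral>\<^sup>+x. norm (g x) \<partial>count_space A)"
proof (cases "(\<integral>\<^sup>+x. norm (g x) \<partial>count_space A) < \<infinity>")
  case True
  hence "integrable (count_space A) g"
    unfolding integrable_iff_bounded by simp
  hence abs: "Infinite_Set_Sum.abs_summable_on g A"
    by (simp add: Infinite_Set_Sum.abs_summable_on_def)
  hence "Infinite_Sum.abs_summable_on g A" using abs_summable_equivalent by blast
  hence "norm (infsum g A) \<le> infsum (\<lambda>x. norm (g x)) A" by (rule norm_infsum_bound)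
  also have "\<dots> = infsetsum (\<lambda>x. norm (g x)) A"
    using abs by (subst infsetsum_infsum) auto
  finally have "ennreal (norm (infsum g A)) \<le> ennreal (infsetsum (\<lambda>x. norm (g x)) A)"
    by (rule ennreal_leI)
  also have "\<dots> = (\<integral>\<^sup>+x. norm (g x) \<partial>count_space A)"
    using abs by (simp add: nn_integral_conv_infsetsum)
  finally show ?thesis .
qed (simp add: not_less top_unique)

abbreviation zsum :: "(int \<Rightarrow> ennreal) \<Rightarrow> ennreal" where
  "zsum f \<equiv> \<integral>\<^sup>+n. f n \<partial>count_space UNIV"

lemma zsum_shift: "zsum (\<lambda>n. f (n - p)) = zsum f"
proof -
  have "bij_betw (\<lambda>n. n - p) (UNIV::int set) UNIV"
    by (rule bij_betwI[of _ _ _ "\<lambda>n. n + p"]) auto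
  from nn_integral_bij_count_space[OF this, of f] show ?thesis .
qed

lemma zsum_reflect: "zsum (\<lambda>p. f (n - p)) = zsum f"
proof -
  have "bij_betw (\<lambda>p. n - p) (UNIV::int set) UNIV"
    by (rule bij_betwI[of _ _ _ "\<lambda>p. n - p"]) auto
  from nn_integral_bij_count_space[OF this, of f] show ?thesis .
qed

lemma zsum_swap: "zsum (\<lambda>m. zsum (\<lambda>n. f m n)) = zsum (\<lambda>n. zsum (\<lambda>m. f m n))"
  by (rule nn_integral_count_space_nn_integral) auto

lemma zsum_zsum_eq_pair: "zsum (\<lambda>m. zsum (\<lambda>n. f (m, n))) = (\<integral>\<^sup>+z. f z \<partial>count_space UNIV)"
  by (rule nn_integral_fst_count_space)

lemma nn_integral_sum3_eq_zsum_zsum: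
  "(\<integral>\<^sup>+z. F z \<partial>count_space {(n1, n2, n3). n1 + n2 + n3 = (n::int)})
     = zsum (\<lambda>n1. zsum (\<lambda>n2. F (n1, n2, n - n1 - n2)))"
proof -
  define h where "h = (\<lambda>(a, b). (a, b, n - a - b))"
  have "bij_betw h UNIV {(n1, n2, n3). n1 + n2 + n3 = n}"
    unfolding h_def by (rule bij_betwI[of _ _ _ "\<lambda>(a, b, c). (a, b)"]) auto
  hence "(\<integral>\<^sup>+z. F z \<partial>count_space {(n1, n2, n3). n1 + n2 + n3 = n})
      = (\<integral>\<^sup>+z. F (h z) \<partial>count_space UNIV)"
    by (rule nn_integral_bij_count_space[symmetric])
  also have "\<dots> = zsum (\<lambda>n1. zsum (\<lambda>n2. F (h (n1, n2))))"
    by (rule zsum_zsum_eq_pair[symmetric])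
  finally show ?thesis by (simp add: h_def)
qed

lemma zsum_mono: "(\<And>n. f n \<le> g n) \<Longrightarrow> zsum f \<le> zsum g"
  by (rule nn_integral_mono) auto

lemma zsum_add: "zsum (\<lambda>n. f n + g n) = zsum f + zsum g"
  by (rule nn_integral_add) auto

lemma zsum_cmult: "zsum (\<lambda>n. c * f n) = c * zsum f"
  by (rule nn_integral_cmult) auto

lemma zsum_cmult_right: "zsum (\<lambda>n. f n * c) = zsum f * c"
  using zsum_cmult[of c f] by (simp add: mult.commute)

lemma zsum_finite_support:
  assumes "finite A" "\<And>n. n \<notin> A \<Longrightarrow> f n = 0"
  shows "zsum f = (\<Sum>n\<in>A. f n)"
  using assms by (intro nn_integral_count_space') auto

lemma zsum_le_of_partial_sums_le:
  assumes "\<And>N::nat. (\<Sum>n\<in>{- int N..int N}. f n) \<le> B"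
  shows "zsum f \<le> B"
proof -
  define fN where "fN N n = (if n \<in> {- int N..int N} then f n else 0)" for N :: nat and n
  have inc: "incseq fN"
    unfolding incseq_def le_fun_def fN_def by auto
  have sup: "(SUP N. fN N n) = f n" for n
  proof (rule antisym)
    show "(SUP N. fN N n) \<le> f n" by (rule SUP_least) (auto simp: fN_def)
    have "fN (nat \<bar>n\<bar>) n = f n" by (auto simp: fN_def)
    thus "f n \<le> (SUP N. fN N n)" by (metis SUP_upper UNIV_I)
  qed
  have "zsum f = (SUP N. zsum (fN N))"
    by (simp add: sup[symmetric] nn_integral_monotone_convergence_SUP[OF inc])
  also have "\<dots> \<le> B"
  proof (rule SUP_least)
    fix N
    have "zsum (fN N) = (\<Sum>n\<in>{- int N..int N}. f n)"
      by (subst zsum_finite_support[of "{- int N..int N}"]) (auto simp: fN_def)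
    thus "zsum (fN N) \<le> B" using assms by simp
  qed
  finally show ?thesis .
qed

lemma zsum_Cauchy_Schwarz: "(zsum (\<lambda>n. f n * g n))\<^sup>2 \<le> zsum (\<lambda>n. (f n)\<^sup>2) * zsum (\<lambda>n. (g n)\<^sup>2)"
  by (rule Cauchy_Schwarz_nn_integral) auto

lemma zsum_zsum_Cauchy_Schwarz:
  "(zsum (\<lambda>m. zsum (\<lambda>n. f m n * g m n)))\<^sup>2
     \<le> zsum (\<lambda>m. zsum (\<lambda>n. (f m n)\<^sup>2)) * zsum (\<lambda>m. zsum (\<lambda>n. (g m n)\<^sup>2))"
proof -
  have "(\<integral>\<^sup>+z. case_prod f z * case_prod g z \<partial>count_space UNIV)\<^sup>2 \<le>
        (\<integral>\<^sup>+z. (case_prod f z)\<^sup>2 \<partial>count_space UNIV) * (\<integral>\<^sup>+z. (case_prod g z)\<^sup>2 \<partial>count_space UNIV)"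
    by (rule Cauchy_Schwarz_nn_integral) auto
  thus ?thesis by (simp add: zsum_zsum_eq_pair[symmetric])
qed

lemma ennreal_add_sq_le:
  fixes x y :: ennreal
  shows "(x + y)\<^sup>2 \<le> 2 * (x\<^sup>2 + y\<^sup>2)"
proof (cases x; cases y)
  fix a b :: real
  assume ab: "x = ennreal a" "0 \<le> a" "y = ennreal b" "0 \<le> b"
  have "(a + b)\<^sup>2 \<le> 2 * (a\<^sup>2 + b\<^sup>2)"
    using zero_le_square[of "a - b"] by (simp add: power2_eq_square algebra_simps)
  hence "ennreal ((a + b)\<^sup>2) \<le> ennreal (2 * (a\<^sup>2 + b\<^sup>2))" by (rule ennreal_leI)
  moreover have "(x + y)\<^sup>2 = ennreal ((a + b)\<^sup>2)"
    using ab by (simp add: ennreal_power ennreal_plus[symmetric] del: ennreal_plus)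
  moreover have "2 * (x\<^sup>2 + y\<^sup>2) = ennreal (2 * (a\<^sup>2 + b\<^sup>2))" using ab by (simp add: ennreal_power ennreal_mult)
  ultimately show ?thesis by (simp only:)
qed auto

lemma le_of_split_sq_le_mult:
  fixes X D1 D2 K :: ennreal
  assumes "X \<le> D1 + D2" "D1\<^sup>2 \<le> K * X" "D2\<^sup>2 \<le> K * X" "X < \<infinity>"
  shows "X \<le> 4 * K"
proof -
  define M where "M = max D1 D2"
  have "X \<le> M + M" unfolding M_def using assms(1) by (rule order_trans) (intro add_mono; simp)
  hence "X * X \<le> (2 * M) * (2 * M)" by (intro mult_mono) (auto simp: mult_2)
  also have "\<dots> = 4 * M\<^sup>2" by (simp add: power2_eq_square mult_ac)
  also have "M\<^sup>2 \<le> K * X" unfolding M_def using assms(2,3) by (cases "D1 \<le> D2") (auto simp: max_def)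
  hence "4 * M\<^sup>2 \<le> 4 * (K * X)" by (rule mult_left_mono) simp
  finally have "X * X \<le> X * (4 * K)" by (simp add: mult_ac)
  thus ?thesis
    using assms(4) by (cases "X = 0") (auto simp: ennreal_mult_le_mult_iff)
qed

section \<open>The Japanese bracket\<close>

lemma jbr_ge_1: "1 \<le> jbr n"
  unfolding jbr_def by simp

lemma jbr_pos: "0 < jbr n"
  using jbr_ge_1[of n] by linarith

lemma jbr_squared: "(jbr n)\<^sup>2 = 1 + (real_of_int n)\<^sup>2"
  unfolding jbr_def by (simp add: add_nonneg_nonneg)

lemma jbr_minus [simp]: "jbr (- n) = jbr n"
  unfolding jbr_def by simp

lemma jbr_abs [simp]: "jbr \<bar>n\<bar> = jbr n"
  unfolding jbr_def by simp

lemma abs_le_jbr: "real_of_int \<bar>n\<bar> \<le> jbr n"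
  unfolding jbr_def by (rule real_le_rsqrt) simp

lemma jbr_mono: "\<bar>m\<bar> \<le> \<bar>n\<bar> \<Longrightarrow> jbr m \<le> jbr n"
  unfolding jbr_def by (simp add: abs_le_square_iff[symmetric])

lemma jbr_le_2_jbr: "\<bar>m\<bar> \<le> 2 * \<bar>n\<bar> \<Longrightarrow> jbr m \<le> 2 * jbr n"
proof -
  assume "\<bar>m\<bar> \<le> 2 * \<bar>n\<bar>"
  hence "\<bar>real_of_int m\<bar> \<le> \<bar>2 * real_of_int n\<bar>" by linarith
  hence "(real_of_int m)\<^sup>2 \<le> (2 * real_of_int n)\<^sup>2"
    by (simp only: abs_le_square_iff)
  hence "(jbr m)\<^sup>2 \<le> (2 * jbr n)\<^sup>2"
    by (simp add: jbr_squared power_mult_distrib)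
  thus ?thesis by (rule power2_le_imp_le) (use jbr_pos[of n] in simp)
qed

lemma jbr_add_le: "jbr (a + b) \<le> 2 * jbr a * jbr b"
proof -
  define x y where "x = real_of_int a" and "y = real_of_int b"
  have "(jbr (a + b))\<^sup>2 = 1 + (x + y)\<^sup>2" by (simp add: jbr_squared x_def y_def)
  also have "\<dots> \<le> 1 + 2 * (x\<^sup>2 + y\<^sup>2)"
    using zero_le_square[of "x - y"] by (simp add: power2_eq_square algebra_simps)
  also have "\<dots> \<le> 4 * ((1 + x\<^sup>2) * (1 + y\<^sup>2))"
    using zero_le_mult_iff[of "x\<^sup>2" "y\<^sup>2"] by (simp add: algebra_simps)
  also have "\<dots> = (2 * jbr a * jbr b)\<^sup>2"
    by (simp add: jbr_squared power_mult_distrib x_def y_def)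
  finally show ?thesis
    by (rule power2_le_imp_le) (use jbr_pos[of a] jbr_pos[of b] in simp)
qed

lemma jbr_powr_squared: "(jbr n powr a)\<^sup>2 = jbr n powr (2 * a)"
  using jbr_pos[of n] by (simp add: powr_realpow[symmetric] powr_powr mult.commute less_imp_le)

lemma powr_le_when_comparable:
  fixes x y b :: real
  assumes "0 < x" "0 < y" "x \<le> 2 * y" "y \<le> 2 * x"
  shows "x powr b \<le> 2 powr \<bar>b\<bar> * y powr b"
proof (cases "b \<ge> 0")
  case True
  have "x powr b \<le> (2 * y) powr b" using assms True by (intro powr_mono2) auto
  thus ?thesis using True assms by (simp add: powr_mult)
next
  case False
  have "x powr b \<le> (y / 2) powr b" using assms False by (intro powr_mono2') auto
  also have "\<dots> = 2 powr (-b) * y powr b" using assms by (simp add: powr_divide powr_minus_divide)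
  finally show ?thesis using False by simp
qed

lemma powr_neg_le_when_half_le:
  fixes x y a :: real
  assumes "0 < x" "0 < y" "y \<le> 2 * x" "0 \<le> a"
  shows "x powr (-a) \<le> 2 powr a * y powr (-a)"
proof -
  have "x powr (-a) \<le> (y / 2) powr (-a)" using assms by (intro powr_mono2') auto
  also have "\<dots> = 2 powr a * y powr (-a)" using assms by (simp add: powr_divide powr_minus_divide)
  finally show ?thesis .
qed

lemma sum_powr_le:
  fixes a :: real
  assumes a: "0 < a" "a < 1"
  shows "(\<Sum>k=1..N. real k powr (a - 1)) \<le> real N powr a / a"
proof (induction N)
  case 0 thus ?case by simp
next
  case (Suc N)
  \<comment> \<open>Young's inequality, applied to \<open>N/(N+1)\<close> and \<open>1\<close>, gives the mean value bound
      \<open>a (N+1)\<^sup>a\<^sup>-\<^sup>1 \<le> (N+1)\<^sup>a - N\<^sup>a\<close>.\<close>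
  have step: "a * real (Suc N) powr (a - 1) \<le> real (Suc N) powr a - real N powr a"
  proof (cases "N = 0")
    case True thus ?thesis using a by simp
  next
    case False
    define M where "M = real (Suc N)"
    have M: "0 < M" "M = real N + 1" by (simp_all add: M_def)
    have "(real N / M) powr a * 1 powr (1 - a) \<le> a * (real N / M) + (1 - a) * 1"
      by (rule Youngs_inequality_0) (use a M False in \<open>auto simp: M_def\<close>)
    hence "real N powr a \<le> M powr a * (a * (real N / M) + (1 - a))"
      using M by (simp add: powr_divide divide_le_eq mult.commute)
    also have "\<dots> = M powr a - a * (M powr a / M)"
      using M by (simp add: field_simps)
    also have "M powr a / M = M powr (a - 1)"
      using M by (simp add: powr_diff)
    finally show ?thesis unfolding M_def by simp
  qed
  have "(\<Sum>k=1..Suc N. real k powr (a - 1)) \<le> real N powr a / a + real (Suc N) powr (a - 1)"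
    using Suc by simp
  also have "\<dots> = (real N powr a + a * real (Suc N) powr (a - 1)) / a"
    using a by (simp add: field_simps)
  also have "\<dots> \<le> real (Suc N) powr a / a"
    using step a by (intro divide_right_mono) auto
  finally show ?case .
qed

lemma sum_symmetric_interval:
  fixes g :: "int \<Rightarrow> 'a::comm_monoid_add"
  shows "(\<Sum>k\<in>{- int N..int N}. g k) = g 0 + (\<Sum>k=1..N. g (int k) + g (- int k))"
proof (induction N)
  case 0 thus ?case by simp
next
  case (Suc N)
  have "{- int (Suc N)..int (Suc N)} = insert (- int (Suc N)) (insert (int (Suc N)) {- int N..int N})"
    by auto
  thus ?case using Suc by (simp add: add_ac)
qed

lemma sum_jbr_powr_le:
  fixes e :: real
  assumes e: "-1 < e"
  obtains C where "0 < C" "\<And>N::nat. (\<Sum>k\<in>{- int N..int N}. jbr k powr e) \<le> C * jbr N powr (1 + e)"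
proof (cases "e \<ge> 0")
  case True
  have "(\<Sum>k\<in>{- int N..int N}. jbr k powr e) \<le> 3 * jbr N powr (1 + e)" for N :: nat
  proof -
    have "(\<Sum>k\<in>{- int N..int N}. jbr k powr e) \<le> (\<Sum>k\<in>{- int N..int N}. jbr N powr e)"
      by (intro sum_mono powr_mono2 jbr_mono) (use True jbr_pos in \<open>auto intro: less_imp_le\<close>)
    also have "\<dots> = (2 * real N + 1) * jbr N powr e" by simp
    also have "\<dots> \<le> (3 * jbr N) * jbr N powr e"
      using abs_le_jbr[of "int N"] jbr_ge_1[of "int N"] by (intro mult_right_mono) auto
    also have "\<dots> = 3 * jbr N powr (1 + e)"
      using jbr_pos[of "int N"] by (simp add: powr_add)
    finally show ?thesis .
  qed
  thus ?thesis by (intro that[of 3]) auto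
next
  case False
  define a where "a = 1 + e"
  have a: "0 < a" "a < 1" using e False by (auto simp: a_def)
  have "(\<Sum>k\<in>{- int N..int N}. jbr k powr e) \<le> (1 + 2 / a) * jbr N powr (1 + e)" for N :: nat
  proof -
    have "(\<Sum>k\<in>{- int N..int N}. jbr k powr e) = 1 + (\<Sum>k=1..N. 2 * jbr k powr e)"
      by (simp add: sum_symmetric_interval jbr_def)
    also have "\<dots> \<le> 1 + (\<Sum>k=1..N. 2 * real k powr (a - 1))"
    proof (intro add_left_mono sum_mono mult_left_mono)
      fix k assume "k \<in> {1..N}"
      hence "jbr k powr e \<le> real k powr e"
        using abs_le_jbr[of "int k"] False by (intro powr_mono2') auto
      thus "jbr k powr e \<le> real k powr (a - 1)" by (simp add: a_def)
    qed simp
    also have "\<dots> \<le> 1 + 2 * (real N powr a / a)"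
      using sum_powr_le[OF a, of N] by (simp add: sum_distrib_left[symmetric])
    also have "\<dots> \<le> jbr N powr a + 2 * (jbr N powr a / a)"
      using jbr_ge_1[of N] abs_le_jbr[of N] a
      by (intro add_mono mult_left_mono divide_right_mono powr_mono2)
        (auto simp: ge_one_powr_ge_zero)
    also have "\<dots> = (1 + 2 / a) * jbr N powr (1 + e)"
      by (simp add: a_def field_simps)
    finally show ?thesis .
  qed
  moreover have "0 < 1 + 2 / a" using a by (simp add: add_pos_pos)
  ultimately show ?thesis by (intro that) auto
qed

lemma jbr_powr_kernel_split:
  assumes "\<bar>r\<bar> \<le> \<bar>P\<bar>" "0 \<le> a"
  shows "jbr (P + r) powr b * jbr r powr (-a) \<le>
    2 powr \<bar>b\<bar> * jbr P powr b * jbr r powr (-a) + 2 powr a * jbr P powr (-a) * jbr (P + r) powr b"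
  \<comment> \<open>Either \<open>r\<close> is small and \<open>\<langle>P + r\<rangle> \<approx> \<langle>P\<rangle>\<close>, or \<open>r\<close> is large and \<open>\<langle>r\<rangle> \<approx> \<langle>P\<rangle>\<close>.\<close>
proof (cases "2 * \<bar>r\<bar> \<le> \<bar>P\<bar>")
  case True
  have "jbr (P + r) \<le> 2 * jbr P" using assms(1) by (intro jbr_le_2_jbr) auto
  moreover have "jbr P \<le> 2 * jbr (P + r)" using True by (intro jbr_le_2_jbr) arith
  ultimately have "jbr (P + r) powr b \<le> 2 powr \<bar>b\<bar> * jbr P powr b"
    by (intro powr_le_when_comparable) (auto simp: jbr_pos)
  hence "jbr (P + r) powr b * jbr r powr (-a) \<le> 2 powr \<bar>b\<bar> * jbr P powr b * jbr r powr (-a)"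
    by (intro mult_right_mono) auto
  thus ?thesis by (smt (verit) powr_ge_zero zero_le_mult_iff)
next
  case False
  have "jbr P \<le> 2 * jbr r" using False by (intro jbr_le_2_jbr) auto
  hence "jbr r powr (-a) \<le> 2 powr a * jbr P powr (-a)"
    using assms(2) by (intro powr_neg_le_when_half_le) (auto simp: jbr_pos)
  hence "jbr (P + r) powr b * jbr r powr (-a) \<le> 2 powr a * jbr P powr (-a) * jbr (P + r) powr b"
    by (metis mult.commute mult_left_mono powr_ge_zero)
  thus ?thesis by (smt (verit) powr_ge_zero zero_le_mult_iff)
qed

lemma sum_jbr_powr_kernel_le:
  fixes a :: real
  assumes a: "0 < a" "a < 1"
  obtains C where "0 < C"
    "\<And>P. (\<Sum>r\<in>{- \<bar>P\<bar>..\<bar>P\<bar>}. jbr (P + r) powr (2 * a - 1) * jbr r powr (-a)) \<le> C * jbr P powr a"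
proof -
  define b where "b = 2 * a - 1"
  obtain C1 where C1: "0 < C1" "\<And>N::nat. (\<Sum>k\<in>{- int N..int N}. jbr k powr (-a)) \<le> C1 * jbr N powr (1 - a)"
    using sum_jbr_powr_le[of "-a"] a by auto
  obtain C2 where C2: "0 < C2" "\<And>N::nat. (\<Sum>k\<in>{- int N..int N}. jbr k powr b) \<le> C2 * jbr N powr (1 + b)"
    using sum_jbr_powr_le[of b] a by (auto simp: b_def)
  define C where "C = 2 powr \<bar>b\<bar> * C1 + 2 powr a * C2 * 2 powr (1 + b)"
  have "(\<Sum>r\<in>{- \<bar>P\<bar>..\<bar>P\<bar>}. jbr (P + r) powr b * jbr r powr (-a)) \<le> C * jbr P powr a" for P
  proof -
    define I where "I = {- \<bar>P\<bar>..\<bar>P\<bar>}"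
    have split: "jbr (P + r) powr b * jbr r powr (-a) \<le>
          2 powr \<bar>b\<bar> * jbr P powr b * jbr r powr (-a) + 2 powr a * jbr P powr (-a) * jbr (P + r) powr b"
      if "r \<in> I" for r
      using that a by (intro jbr_powr_kernel_split) (auto simp: I_def)
    have small: "(\<Sum>r\<in>I. jbr r powr (-a)) \<le> C1 * jbr P powr (1 - a)"
      using C1(2)[of "nat \<bar>P\<bar>"] by (simp add: I_def)
    have "(\<Sum>r\<in>I. jbr (P + r) powr b) = (\<Sum>k\<in>(\<lambda>r. P + r) ` I. jbr k powr b)"
      by (subst sum.reindex) (auto simp: inj_on_def)
    also have "\<dots> \<le> (\<Sum>k\<in>{- int (nat (2 * \<bar>P\<bar>))..int (nat (2 * \<bar>P\<bar>))}. jbr k powr b)"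
      by (rule sum_mono2) (auto simp: I_def)
    also have "\<dots> \<le> C2 * jbr (2 * \<bar>P\<bar>) powr (1 + b)"
      using C2(2)[of "nat (2 * \<bar>P\<bar>)"] by simp
    also have "\<dots> \<le> C2 * (2 powr (1 + b) * jbr P powr (1 + b))"
    proof -
      have "jbr (2 * \<bar>P\<bar>) powr (1 + b) \<le> (2 * jbr P) powr (1 + b)"
        using a by (intro powr_mono2 jbr_le_2_jbr) (auto simp: b_def jbr_pos less_imp_le)
      thus ?thesis using C2(1) by (simp add: powr_mult)
    qed
    finally have large: "(\<Sum>r\<in>I. jbr (P + r) powr b) \<le> C2 * (2 powr (1 + b) * jbr P powr (1 + b))" .
    have "(\<Sum>r\<in>I. jbr (P + r) powr b * jbr r powr (-a)) \<le>
       2 powr \<bar>b\<bar> * jbr P powr b * (\<Sum>r\<in>I. jbr r powr (-a))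
       + 2 powr a * jbr P powr (-a) * (\<Sum>r\<in>I. jbr (P + r) powr b)"
      using sum_mono[OF split] by (simp add: sum.distrib sum_distrib_left)
    also have "\<dots> \<le> 2 powr \<bar>b\<bar> * jbr P powr b * (C1 * jbr P powr (1 - a))
       + 2 powr a * jbr P powr (-a) * (C2 * (2 powr (1 + b) * jbr P powr (1 + b)))"
      using small large by (intro add_mono mult_left_mono) auto
    also have "\<dots> = 2 powr \<bar>b\<bar> * C1 * (jbr P powr b * jbr P powr (1 - a))
       + 2 powr a * C2 * 2 powr (1 + b) * (jbr P powr (-a) * jbr P powr (1 + b))"
      by (simp add: mult_ac)
    also have "jbr P powr b * jbr P powr (1 - a) = jbr P powr a"
      using jbr_pos[of P] by (simp add: powr_add[symmetric] b_def)
    also have "jbr P powr (-a) * jbr P powr (1 + b) = jbr P powr a"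
      using jbr_pos[of P] by (simp add: powr_add[symmetric] b_def)
    also have "2 powr \<bar>b\<bar> * C1 * jbr P powr a + 2 powr a * C2 * 2 powr (1 + b) * jbr P powr a
        = C * jbr P powr a"
      by (simp add: C_def distrib_right)
    finally show ?thesis unfolding I_def .
  qed
  with C1(1) C2(1) show ?thesis
    by (intro that[of C]) (auto simp: C_def b_def intro!: add_pos_pos)
qed

lemma sum_inverse_one_plus_square_le: "(\<Sum>k=1..N. 1 / (1 + (real k)\<^sup>2)) \<le> 2 - 2 / (real N + 1)"
proof (induction N)
  case 0 thus ?case by simp
next
  case (Suc N)
  define x where "x = real N"
  have x: "0 \<le> x" by (simp add: x_def)
  have "(x + 1) * (x + 2) \<le> 2 * (1 + (x + 1)\<^sup>2)"
    using x mult_nonneg_nonneg[OF x x] by (simp add: power2_eq_square algebra_simps)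
  hence "1 / (1 + (x + 1)\<^sup>2) \<le> 2 / ((x + 1) * (x + 2))"
    using x by (simp add: divide_simps add_pos_nonneg)
  also have "2 / ((x + 1) * (x + 2)) = 2 / (x + 1) - 2 / (x + 2)"
    using x by (simp add: field_simps)
  finally have step: "1 / (1 + (x + 1)\<^sup>2) \<le> 2 / (x + 1) - 2 / (x + 2)" .
  show ?case
    using Suc step by (simp add: x_def add.commute)
qed

section \<open>Weights, weighted norms and convolutions\<close>

definition jpow :: "real \<Rightarrow> int \<Rightarrow> ennreal" where
  "jpow e n = ennreal (jbr n powr e)"

lemma ennreal_le_mult_jpow:
  assumes "x \<le> c * jbr k powr e" "0 \<le> c"
  shows "ennreal x \<le> ennreal c * jpow e k"
proof -
  have "ennreal x \<le> ennreal (c * jbr k powr e)" using assms(1) by (rule ennreal_leI)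
  also have "\<dots> = ennreal c * jpow e k" unfolding jpow_def using assms(2) by (rule ennreal_mult')
  finally show ?thesis .
qed

lemma jpow_mult: "jpow a n * jpow b n = jpow (a + b) n"
  unfolding jpow_def by (simp add: ennreal_mult[symmetric] powr_add)

lemma jpow_squared: "(jpow a n)\<^sup>2 = jpow (2 * a) n"
  unfolding jpow_def by (simp add: ennreal_power jbr_powr_squared)

lemma jpow_inverse: "jpow (- e) n * jpow e n = 1"
  unfolding jpow_mult using jbr_pos[of n] by (simp add: jpow_def)

lemma one_le_jpow: "0 \<le> e \<Longrightarrow> 1 \<le> jpow e n"
  unfolding jpow_def using jbr_ge_1[of n] by (simp add: ge_one_powr_ge_zero)

lemma jpow_add_le: "0 \<le> s \<Longrightarrow> jpow s (a + b) \<le> ennreal (2 powr s) * jpow s a * jpow s b"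
proof -
  assume s: "0 \<le> s"
  have "jbr (a + b) powr s \<le> (2 * jbr a * jbr b) powr s"
    using jbr_add_le[of a b] s by (intro powr_mono2) (auto simp: jbr_pos less_imp_le)
  also have "\<dots> = 2 powr s * jbr a powr s * jbr b powr s"
    using jbr_pos[of a] jbr_pos[of b] by (simp add: powr_mult)
  finally show ?thesis unfolding jpow_def by (simp add: ennreal_mult[symmetric])
qed

lemma jpow_mult_sq_le:
  "jpow (2 * e) n * (ennreal (4 * real_of_int \<bar>n\<bar>))\<^sup>2 \<le> 16 * jpow (2 * (e + 1)) n"
proof -
  have "(real_of_int \<bar>n\<bar>)\<^sup>2 \<le> (jbr n)\<^sup>2" by (intro power_mono abs_le_jbr) simp
  hence "jbr n powr (2 * e) * (4 * real_of_int \<bar>n\<bar>)\<^sup>2 \<le> 16 * (jbr n powr (2 * e) * jbr n powr 2)"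
    using jbr_pos[of n] by (simp add: power_mult_distrib powr_realpow)
  also have "jbr n powr (2 * e) * jbr n powr 2 = jbr n powr (2 * (e + 1))"
    by (simp add: powr_add[symmetric] distrib_left)
  finally have "ennreal (jbr n powr (2 * e) * (4 * real_of_int \<bar>n\<bar>)\<^sup>2)
      \<le> ennreal (16 * jbr n powr (2 * (e + 1)))" by (rule ennreal_leI)
  thus ?thesis by (simp add: jpow_def ennreal_power ennreal_mult)
qed

lemma zsum_jpow_neg2_le: "zsum (jpow (-2)) \<le> 5"
proof (rule zsum_le_of_partial_sums_le)
  fix N :: nat
  have "jbr k powr (-2) = 1 / (1 + (real_of_int k)\<^sup>2)" for k
    using jbr_pos[of k] by (simp add: powr_minus powr_realpow jbr_squared divide_inverse)
  hence "(\<Sum>k\<in>{- int N..int N}. jbr k powr (-2)) = 1 + 2 * (\<Sum>k=1..N. 1 / (1 + (real k)\<^sup>2))"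
    by (simp add: sum_symmetric_interval sum_distrib_left)
  also have "\<dots> \<le> 5"
    using sum_inverse_one_plus_square_le[of N] divide_nonneg_nonneg[of 2 "real N + 1"] by linarith
  finally show "(\<Sum>n\<in>{- int N..int N}. jpow (-2) n) \<le> 5"
    unfolding jpow_def by (subst sum_ennreal) (auto simp: ennreal_le_iff[symmetric] simp del: ennreal_le_iff)
qed

definition l2s_sq :: "real \<Rightarrow> (int \<Rightarrow> ennreal) \<Rightarrow> ennreal" where
  "l2s_sq s u = zsum (\<lambda>n. jpow (2 * s) n * (u n)\<^sup>2)"

lemma ennreal_weighted_sq: "0 \<le> x \<Longrightarrow> ennreal ((jbr n powr e * x)\<^sup>2) = jpow (2 * e) n * (ennreal x)\<^sup>2"
  by (simp add: jpow_def power_mult_distrib jbr_powr_squared ennreal_mult ennreal_power)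

lemma l2s_sq_norm_eq:
  assumes "in_l2s s v"
  shows "l2s_sq s (\<lambda>n. ennreal (cmod (v n))) = ennreal ((l2s_norm s v)\<^sup>2)"
proof -
  have "l2s_sq s (\<lambda>n. ennreal (cmod (v n))) = (\<integral>\<^sup>+n. ennreal ((jbr n powr s * cmod (v n))\<^sup>2) \<partial>count_space UNIV)"
    by (simp add: l2s_sq_def ennreal_weighted_sq)
  also have "\<dots> = ennreal (\<Sum>\<^sub>\<infinity>n. (jbr n powr s * cmod (v n))\<^sup>2)"
    using assms unfolding in_l2s_def by (intro nn_integral_count_space_eq_infsum) simp_all
  also have "\<dots> = ennreal ((l2s_norm s v)\<^sup>2)"
    by (simp add: l2s_norm_def infsum_nonneg)
  finally show ?thesis .
qed

lemma l2s_sq_norm_star: "l2s_sq s (\<lambda>n. ennreal (cmod (star v n))) = l2s_sq s (\<lambda>n. ennreal (cmod (v n)))"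
  unfolding l2s_sq_def star_def
  using zsum_reflect[of "\<lambda>n. jpow (2 * s) n * (ennreal (cmod (v n)))\<^sup>2" 0]
  by (simp add: jpow_def)

lemma in_l2s_norm_le_of_l2s_sq_le:
  assumes "l2s_sq e (\<lambda>n. ennreal (cmod (v n))) \<le> ennreal B" "0 \<le> B"
  shows "in_l2s e v \<and> l2s_norm e v \<le> sqrt B"
proof -
  define h where "h = (\<lambda>n. (jbr n powr e * cmod (v n))\<^sup>2)"
  have h: "l2s_sq e (\<lambda>n. ennreal (cmod (v n))) = (\<integral>\<^sup>+n. h n \<partial>count_space UNIV)"
    by (simp add: l2s_sq_def h_def ennreal_weighted_sq)
  have finite: "(\<integral>\<^sup>+n. h n \<partial>count_space UNIV) < \<infinity>"
    using assms(1) unfolding h by (rule le_less_trans) simp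
  have "in_l2s e v"
    unfolding in_l2s_def h_def[symmetric]
    using nonneg_summable_on_of_nn_integral_finite(1)[OF _ finite] by (simp add: h_def)
  moreover have "infsum h UNIV \<le> B"
  proof -
    have "infsum h UNIV = enn2real (\<integral>\<^sup>+n. h n \<partial>count_space UNIV)"
      using nonneg_summable_on_of_nn_integral_finite(2)[OF _ finite] by (simp add: h_def)
    also have "\<dots> \<le> enn2real (ennreal B)"
      using assms h by (intro enn2real_mono) auto
    finally show ?thesis using assms(2) by simp
  qed
  moreover have "l2s_norm e v = sqrt (infsum h UNIV)" by (simp add: l2s_norm_def h_def)
  ultimately show ?thesis by simp
qed

definition conv :: "(int \<Rightarrow> ennreal) \<Rightarrow> (int \<Rightarrow> ennreal) \<Rightarrow> int \<Rightarrow> ennreal" where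
  "conv u w n = zsum (\<lambda>p. u p * w (n - p))"

definition conv_high :: "(int \<Rightarrow> ennreal) \<Rightarrow> (int \<Rightarrow> ennreal) \<Rightarrow> int \<Rightarrow> ennreal" where
  "conv_high u w n = zsum (\<lambda>p. if \<bar>n - p\<bar> \<le> \<bar>p\<bar> then u p * w (n - p) else 0)"

lemma conv_le_conv_high: "conv u w n \<le> conv_high u w n + conv_high w u n"
proof -
  have "conv u w n \<le> zsum (\<lambda>p. (if \<bar>n - p\<bar> \<le> \<bar>p\<bar> then u p * w (n - p) else 0)
                           + (if \<bar>p\<bar> \<le> \<bar>n - p\<bar> then u p * w (n - p) else 0))"
    unfolding conv_def by (rule zsum_mono) auto
  also have "\<dots> = conv_high u w n + zsum (\<lambda>p. if \<bar>p\<bar> \<le> \<bar>n - p\<bar> then u p * w (n - p) else 0)"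
    unfolding conv_high_def by (rule zsum_add)
  also have "zsum (\<lambda>p. if \<bar>p\<bar> \<le> \<bar>n - p\<bar> then u p * w (n - p) else 0)
      = zsum (\<lambda>p. (\<lambda>q. if \<bar>n - q\<bar> \<le> \<bar>q\<bar> then w q * u (n - q) else 0) (n - p))"
  proof -
    have "n - (n - p) = p" for p :: int by simp
    thus ?thesis by (simp only: mult.commute)
  qed
  also have "\<dots> = conv_high w u n" unfolding conv_high_def by (rule zsum_reflect)
  finally show ?thesis .
qed

lemma conv_finite:
  assumes "0 \<le> s" "l2s_sq s u < \<infinity>" "l2s_sq s w < \<infinity>"
  shows "conv u w n < \<infinity>"
proof -
  have "(conv u w n)\<^sup>2 \<le> zsum (\<lambda>p. (u p)\<^sup>2) * zsum (\<lambda>p. (w (n - p))\<^sup>2)"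
    unfolding conv_def by (rule zsum_Cauchy_Schwarz)
  also have "\<dots> = zsum (\<lambda>p. (u p)\<^sup>2) * zsum (\<lambda>p. (w p)\<^sup>2)"
    using zsum_reflect[of "\<lambda>p. (w p)\<^sup>2" n] by simp
  also have "\<dots> \<le> l2s_sq s u * l2s_sq s w"
  proof -
    have "x \<le> jpow (2 * s) n * x" for x n
      using mult_right_mono[OF one_le_jpow[of "2 * s" n], of x] assms(1) by simp
    thus ?thesis unfolding l2s_sq_def by (intro mult_mono zsum_mono) auto
  qed
  also have "\<dots> < \<infinity>" using assms(2,3) by (simp add: ennreal_mult_less_top)
  finally show ?thesis by (cases "conv u w n = 0") (auto simp: power2_eq_square ennreal_mult_less_top)
qed

lemma l2s_sq_conv_smoothing_le:
  assumes s: "0 \<le> s"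
  shows "l2s_sq s (conv (\<lambda>q. b q * jpow (-1) q) c) \<le> ennreal (4 powr s * 5) * l2s_sq s b * l2s_sq s c"
proof -
  define F where "F m q = jpow s q * b q * (jpow s (m - q) * c (m - q))" for m q
  have "2 powr s * 2 powr s = (4::real) powr s" by (simp add: powr_mult[symmetric])
  hence four: "(ennreal (2 powr s))\<^sup>2 = ennreal (4 powr s)"
    by (simp add: power2_eq_square ennreal_mult[symmetric])
  have pointwise: "jpow (2 * s) m * (conv (\<lambda>q. b q * jpow (-1) q) c m)\<^sup>2
      \<le> ennreal (4 powr s * 5) * zsum (\<lambda>q. (F m q)\<^sup>2)" for m
  proof -
    have "jpow s m * conv (\<lambda>q. b q * jpow (-1) q) c m = zsum (\<lambda>q. jpow s m * (b q * jpow (-1) q * c (m - q)))"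
      unfolding conv_def by (rule zsum_cmult[symmetric])
    also have "\<dots> \<le> zsum (\<lambda>q. ennreal (2 powr s) * (F m q * jpow (-1) q))"
    proof (rule zsum_mono)
      fix q
      have "jpow s m * (b q * jpow (-1) q * c (m - q))
          \<le> ennreal (2 powr s) * jpow s q * jpow s (m - q) * (b q * jpow (-1) q * c (m - q))"
        using jpow_add_le[OF s, of q "m - q"] by (intro mult_right_mono) simp_all
      thus "jpow s m * (b q * jpow (-1) q * c (m - q)) \<le> ennreal (2 powr s) * (F m q * jpow (-1) q)"
        by (simp add: F_def mult_ac)
    qed
    also have "\<dots> = ennreal (2 powr s) * zsum (\<lambda>q. F m q * jpow (-1) q)"
      by (rule zsum_cmult)
    finally have "(jpow s m * conv (\<lambda>q. b q * jpow (-1) q) c m)\<^sup>2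
        \<le> (ennreal (2 powr s))\<^sup>2 * (zsum (\<lambda>q. F m q * jpow (-1) q))\<^sup>2"
      by (simp add: power_mono power_mult_distrib[symmetric])
    also have "\<dots> \<le> (ennreal (2 powr s))\<^sup>2 * (zsum (\<lambda>q. (F m q)\<^sup>2) * zsum (jpow (-2)))"
      using zsum_Cauchy_Schwarz[of "F m" "jpow (-1)"] by (intro mult_left_mono) (simp_all add: jpow_squared)
    also have "\<dots> \<le> (ennreal (2 powr s))\<^sup>2 * (zsum (\<lambda>q. (F m q)\<^sup>2) * 5)"
      by (intro mult_left_mono zsum_jpow_neg2_le) simp_all
    finally show ?thesis
      by (simp add: four power_mult_distrib jpow_squared ennreal_mult mult_ac)
  qed
  have "l2s_sq s (conv (\<lambda>q. b q * jpow (-1) q) c) \<le> zsum (\<lambda>m. ennreal (4 powr s * 5) * zsum (\<lambda>q. (F m q)\<^sup>2))"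
    unfolding l2s_sq_def by (rule zsum_mono) (rule pointwise)
  also have "\<dots> = ennreal (4 powr s * 5) * zsum (\<lambda>q. zsum (\<lambda>m. (F m q)\<^sup>2))"
    by (simp add: zsum_cmult zsum_swap[of "\<lambda>m q. (F m q)\<^sup>2"])
  also have "zsum (\<lambda>q. zsum (\<lambda>m. (F m q)\<^sup>2))
      = zsum (\<lambda>q. jpow (2 * s) q * (b q)\<^sup>2 * zsum (\<lambda>m. jpow (2 * s) (m - q) * (c (m - q))\<^sup>2))"
    by (simp add: F_def power_mult_distrib jpow_squared mult_ac zsum_cmult[symmetric])
  also have "\<dots> = l2s_sq s b * l2s_sq s c"
    by (simp add: l2s_sq_def zsum_shift[where f = "\<lambda>n. jpow (2 * s) n * (c n)\<^sup>2"] zsum_cmult_right)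
  finally show ?thesis by (simp add: mult.assoc)
qed

section \<open>The product estimate\<close>

lemma zsum_kernel_le:
  fixes a :: real
  assumes "0 < a" "a < 1"
  obtains K where "0 < K" "\<And>p. jpow (-a) p
    * zsum (\<lambda>n. if \<bar>n - p\<bar> \<le> \<bar>p\<bar> then jpow (2 * a - 1) n * jpow (-a) (n - p) else 0) \<le> ennreal K"
proof -
  obtain C where "0 < C" and C: "\<And>P. (\<Sum>r\<in>{- \<bar>P\<bar>..\<bar>P\<bar>}. jbr (P + r) powr (2 * a - 1) * jbr r powr (-a)) \<le> C * jbr P powr a"
    using sum_jbr_powr_kernel_le[OF assms] by blast
  have "jpow (-a) p
    * zsum (\<lambda>n. if \<bar>n - p\<bar> \<le> \<bar>p\<bar> then jpow (2 * a - 1) n * jpow (-a) (n - p) else 0) \<le> ennreal C" for p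
  proof -
    define h where "h n = (if \<bar>n - p\<bar> \<le> \<bar>p\<bar> then jpow (2 * a - 1) n * jpow (-a) (n - p) else 0)" for n
    have "zsum h = zsum (\<lambda>r. h (r + p))"
      using zsum_shift[of h "- p"] by simp
    also have "\<dots> = (\<Sum>r\<in>{- \<bar>p\<bar>..\<bar>p\<bar>}. ennreal (jbr (p + r) powr (2 * a - 1) * jbr r powr (-a)))"
      by (subst zsum_finite_support[of "{- \<bar>p\<bar>..\<bar>p\<bar>}"])
        (auto simp: h_def jpow_def ennreal_mult add.commute intro!: sum.cong)
    also have "\<dots> \<le> ennreal (C * jbr p powr a)"
      using C[of p] by (simp add: sum_ennreal ennreal_leI)
    finally have "jpow (-a) p * zsum h \<le> ennreal (jbr p powr (-a)) * ennreal (C * jbr p powr a)"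
      unfolding jpow_def by (rule mult_left_mono) simp
    also have "\<dots> = ennreal (jbr p powr (-a) * (C * jbr p powr a))"
      by (rule ennreal_mult'[symmetric]) simp
    also have "jbr p powr (-a) * (C * jbr p powr a) = C"
      using jbr_pos[of p] by (simp add: powr_minus field_simps)
    finally show ?thesis by (simp add: h_def)
  qed
  with \<open>0 < C\<close> show ?thesis by (rule that)
qed

lemma Schur_conv_high_le:
  assumes kernel: "\<And>p. jpow (-(2 * s)) p
    * zsum (\<lambda>n. if \<bar>n - p\<bar> \<le> \<bar>p\<bar> then jpow (2 * (2 * s) - 1) n * jpow (-(2 * s)) (n - p) else 0)
    \<le> ennreal K"
  shows "(zsum (\<lambda>n. G n * jpow (2 * s - 1/2) n * conv_high u w n))\<^sup>2
    \<le> ennreal K * l2s_sq s u * l2s_sq s w * zsum (\<lambda>n. (G n)\<^sup>2)"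
proof -
  \<comment> \<open>Split each term as \<open>f * g\<close>, with the kernel of the Schur test put into \<open>f\<close>.\<close>
  define f where "f n p = (if \<bar>n - p\<bar> \<le> \<bar>p\<bar>
    then jpow (2 * s - 1/2) n * jpow (-s) p * jpow (-s) (n - p) * (jpow s p * u p) else 0)" for n p
  define g where "g n p = G n * (jpow s (n - p) * w (n - p))" for n p
  have fg: "G n * jpow (2 * s - 1/2) n * conv_high u w n = zsum (\<lambda>p. f n p * g n p)" for n
  proof -
    have "jpow (2 * s - 1/2) n * jpow (-s) p * jpow (-s) (n - p) * (jpow s p * u p)
        * (G n * (jpow s (n - p) * w (n - p)))
      = G n * jpow (2 * s - 1/2) n * (u p * w (n - p))
        * ((jpow (-s) p * jpow s p) * (jpow (-s) (n - p) * jpow s (n - p)))" for p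
      by (simp add: mult_ac)
    hence "G n * jpow (2 * s - 1/2) n * (if \<bar>n - p\<bar> \<le> \<bar>p\<bar> then u p * w (n - p) else 0) = f n p * g n p" for p
      by (simp add: f_def g_def jpow_inverse)
    thus ?thesis unfolding conv_high_def by (simp add: zsum_cmult[symmetric])
  qed
  have "zsum (\<lambda>n. zsum (\<lambda>p. (f n p)\<^sup>2))
      = zsum (\<lambda>p. jpow (2 * s) p * (u p)\<^sup>2 * (jpow (-(2 * s)) p
          * zsum (\<lambda>n. if \<bar>n - p\<bar> \<le> \<bar>p\<bar> then jpow (2 * (2 * s) - 1) n * jpow (-(2 * s)) (n - p) else 0)))"
  proof -
    have "2 * (2 * s - 1 / 2) = 2 * (2 * s) - 1" by simp
    hence "(f n p)\<^sup>2 = jpow (2 * s) p * (u p)\<^sup>2 * jpow (-(2 * s)) p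
        * (if \<bar>n - p\<bar> \<le> \<bar>p\<bar> then jpow (2 * (2 * s) - 1) n * jpow (-(2 * s)) (n - p) else 0)" for n p
      by (simp add: f_def power_mult_distrib jpow_squared mult_ac)
    thus ?thesis by (subst zsum_swap) (simp add: zsum_cmult mult.assoc)
  qed
  also have "\<dots> \<le> zsum (\<lambda>p. jpow (2 * s) p * (u p)\<^sup>2 * ennreal K)"
    by (intro zsum_mono mult_left_mono kernel) simp
  also have "\<dots> = ennreal K * l2s_sq s u"
    unfolding l2s_sq_def by (subst zsum_cmult_right) (rule mult.commute)
  finally have f2: "zsum (\<lambda>n. zsum (\<lambda>p. (f n p)\<^sup>2)) \<le> ennreal K * l2s_sq s u" .
  have "zsum (\<lambda>n. zsum (\<lambda>p. (g n p)\<^sup>2)) = zsum (\<lambda>n. (G n)\<^sup>2 * zsum (\<lambda>p. jpow (2 * s) (n - p) * (w (n - p))\<^sup>2))"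
    by (simp add: g_def power_mult_distrib jpow_squared zsum_cmult mult.assoc)
  also have "\<dots> = zsum (\<lambda>n. (G n)\<^sup>2 * l2s_sq s w)"
    unfolding l2s_sq_def by (simp only: zsum_reflect[where f = "\<lambda>p. jpow (2 * s) p * (w p)\<^sup>2"])
  also have "\<dots> = l2s_sq s w * zsum (\<lambda>n. (G n)\<^sup>2)"
    by (subst zsum_cmult_right) (rule mult.commute)
  finally have g2: "zsum (\<lambda>n. zsum (\<lambda>p. (g n p)\<^sup>2)) = l2s_sq s w * zsum (\<lambda>n. (G n)\<^sup>2)" .
  have "(zsum (\<lambda>n. G n * jpow (2 * s - 1/2) n * conv_high u w n))\<^sup>2
      \<le> zsum (\<lambda>n. zsum (\<lambda>p. (f n p)\<^sup>2)) * zsum (\<lambda>n. zsum (\<lambda>p. (g n p)\<^sup>2))"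
    unfolding fg by (rule zsum_zsum_Cauchy_Schwarz)
  also have "\<dots> \<le> ennreal K * l2s_sq s u * (l2s_sq s w * zsum (\<lambda>n. (G n)\<^sup>2))"
    unfolding g2 by (rule mult_right_mono[OF f2]) simp
  finally show ?thesis by (simp add: mult.assoc)
qed

lemma l2s_sq_conv_le:
  assumes s: "0 < s" "s < 1/2"
  obtains K where "0 \<le> K" "\<And>u w. l2s_sq s u < \<infinity> \<Longrightarrow> l2s_sq s w < \<infinity> \<Longrightarrow>
    l2s_sq (2 * s - 1/2) (conv u w) \<le> ennreal K * l2s_sq s u * l2s_sq s w"
proof -
  obtain K where "0 < K" and kernel: "\<And>p. jpow (-(2 * s)) p
    * zsum (\<lambda>n. if \<bar>n - p\<bar> \<le> \<bar>p\<bar> then jpow (2 * (2 * s) - 1) n * jpow (-(2 * s)) (n - p) else 0)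
    \<le> ennreal K"
    using zsum_kernel_le[of "2 * s"] s by auto
  have "l2s_sq (2 * s - 1/2) (conv u w) \<le> ennreal (4 * K) * l2s_sq s u * l2s_sq s w"
    if fu: "l2s_sq s u < \<infinity>" and fw: "l2s_sq s w < \<infinity>" for u w
    unfolding l2s_sq_def[of "2 * s - 1/2"]
  proof (rule zsum_le_of_partial_sums_le)
    \<comment> \<open>The dual pairing is taken against the truncation \<open>G\<close> of the convolution itself; the
        truncation makes \<open>X\<close> finite, so that it can be cancelled.\<close>
    fix N :: nat
    define I where "I = {- int N..int N}"
    define X where "X = (\<Sum>n\<in>I. jpow (2 * (2 * s - 1/2)) n * (conv u w n)\<^sup>2)"
    define G where "G n = (if n \<in> I then jpow (2 * s - 1/2) n * conv u w n else 0)" for n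
    have G_conv: "G n * jpow (2 * s - 1/2) n * conv u w n = (G n)\<^sup>2" for n
      by (simp add: G_def power2_eq_square mult_ac)
    have X_G: "X = zsum (\<lambda>n. (G n)\<^sup>2)"
      unfolding X_def by (subst zsum_finite_support[of I])
        (auto simp: I_def G_def power_mult_distrib jpow_squared)
    define D1 where "D1 = zsum (\<lambda>n. G n * jpow (2 * s - 1/2) n * conv_high u w n)"
    define D2 where "D2 = zsum (\<lambda>n. G n * jpow (2 * s - 1/2) n * conv_high w u n)"
    have "X < \<infinity>"
      unfolding X_def using conv_finite[of s u w] s fu fw
      by (auto simp: I_def jpow_def power2_eq_square ennreal_mult_less_top)
    moreover have "X \<le> D1 + D2"
    proof -
      have "X = zsum (\<lambda>n. G n * jpow (2 * s - 1/2) n * conv u w n)"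
        by (simp only: X_G G_conv)
      also have "\<dots> \<le> zsum (\<lambda>n. G n * jpow (2 * s - 1/2) n * conv_high u w n
                              + G n * jpow (2 * s - 1/2) n * conv_high w u n)"
        by (intro zsum_mono) (simp add: distrib_left[symmetric] mult_left_mono conv_le_conv_high)
      finally show ?thesis unfolding D1_def D2_def by (simp only: zsum_add)
    qed
    moreover have "D1\<^sup>2 \<le> (ennreal K * l2s_sq s u * l2s_sq s w) * X"
      unfolding D1_def X_G by (rule Schur_conv_high_le[OF kernel])
    moreover have "D2\<^sup>2 \<le> (ennreal K * l2s_sq s u * l2s_sq s w) * X"
      using Schur_conv_high_le[OF kernel, of G w u] unfolding D2_def X_G by (simp add: mult_ac)
    ultimately have "X \<le> 4 * (ennreal K * l2s_sq s u * l2s_sq s w)"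
      by (intro le_of_split_sq_le_mult)
    thus "(\<Sum>n\<in>{- int N..int N}. jpow (2 * (2 * s - 1/2)) n * (conv u w n)\<^sup>2)
        \<le> ennreal (4 * K) * l2s_sq s u * l2s_sq s w"
      using \<open>0 < K\<close> by (simp add: X_def I_def ennreal_mult mult_ac)
  qed
  with \<open>0 < K\<close> show ?thesis by (intro that[of "4 * K"]) auto
qed

lemma l2s_sq_trilinear_le:
  assumes s: "0 < s" "s < 1/2"
  obtains K where "0 \<le> K" "\<And>a b c. l2s_sq s a < \<infinity> \<Longrightarrow> l2s_sq s b < \<infinity> \<Longrightarrow> l2s_sq s c < \<infinity> \<Longrightarrow>
    l2s_sq (2 * s - 1/2) (conv a (conv (\<lambda>q. b q * jpow (-1) q) c))
      \<le> ennreal K * l2s_sq s a * l2s_sq s b * l2s_sq s c"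
proof -
  obtain K where "0 \<le> K" and K: "\<And>u w. l2s_sq s u < \<infinity> \<Longrightarrow> l2s_sq s w < \<infinity> \<Longrightarrow>
    l2s_sq (2 * s - 1/2) (conv u w) \<le> ennreal K * l2s_sq s u * l2s_sq s w"
    using l2s_sq_conv_le[OF s] by blast
  define KW where "KW = 4 powr s * 5"
  have "l2s_sq (2 * s - 1/2) (conv a (conv (\<lambda>q. b q * jpow (-1) q) c))
      \<le> ennreal (K * KW) * l2s_sq s a * l2s_sq s b * l2s_sq s c"
    if fa: "l2s_sq s a < \<infinity>" and fb: "l2s_sq s b < \<infinity>" and fc: "l2s_sq s c < \<infinity>" for a b c
  proof -
    have smooth: "l2s_sq s (conv (\<lambda>q. b q * jpow (-1) q) c) \<le> ennreal KW * l2s_sq s b * l2s_sq s c"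
      unfolding KW_def using s by (intro l2s_sq_conv_smoothing_le) simp
    also have "\<dots> < \<infinity>" using fb fc by (simp add: ennreal_mult_less_top)
    finally have "l2s_sq (2 * s - 1/2) (conv a (conv (\<lambda>q. b q * jpow (-1) q) c))
        \<le> ennreal K * l2s_sq s a * l2s_sq s (conv (\<lambda>q. b q * jpow (-1) q) c)"
      using K fa by blast
    also have "\<dots> \<le> ennreal K * l2s_sq s a * (ennreal KW * l2s_sq s b * l2s_sq s c)"
      by (rule mult_left_mono[OF smooth]) simp
    finally show ?thesis
      using \<open>0 \<le> K\<close> by (simp add: KW_def ennreal_mult mult_ac)
  qed
  with \<open>0 \<le> K\<close> show ?thesis by (intro that[of "K * KW"]) (auto simp: KW_def)
qed

section \<open>The nonlinearity\<close>

lemma norm_hatn: "cmod (hatn q) = (if q = 0 then 1 else real_of_int \<bar>q\<bar>)"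
  by (simp add: hatn_def)

lemma inverse_norm_hatn_le: "1 / cmod (hatn q) \<le> 2 * jbr q powr (-1)"
proof -
  have "(jbr q)\<^sup>2 \<le> (2 * cmod (hatn q))\<^sup>2"
  proof (cases "q = 0")
    case False
    hence "1 \<le> \<bar>real_of_int q\<bar>" by linarith
    hence "1 \<le> (real_of_int q)\<^sup>2" using abs_le_square_iff[of 1 "real_of_int q"] by simp
    thus ?thesis using False by (simp add: jbr_squared norm_hatn power_mult_distrib)
  qed (simp add: jbr_squared norm_hatn)
  hence "jbr q \<le> 2 * cmod (hatn q)" by (rule power2_le_imp_le) (simp add: norm_hatn)
  hence "1 / cmod (hatn q) \<le> 2 / jbr q"
    using jbr_pos[of q] by (simp add: norm_hatn field_simps)
  thus ?thesis using jbr_pos[of q] by (simp add: powr_minus divide_inverse)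
qed

lemma norm_multiplier_le:
  assumes "\<bar>k\<bar> \<le> \<bar>a\<bar>"
  shows "cmod (2 * \<i> * of_int n * of_int k / (hatn a * hatn b)) \<le> 4 * real_of_int \<bar>n\<bar> * jbr b powr (-1)"
proof -
  have k: "real_of_int \<bar>k\<bar> \<le> cmod (hatn a)" using assms by (cases "a = 0") (simp_all add: norm_hatn)
  have pos: "0 < cmod (hatn a)" "0 < cmod (hatn b)" by (simp_all add: norm_hatn)
  have "cmod (2 * \<i> * of_int n * of_int k / (hatn a * hatn b))
      = 2 * real_of_int \<bar>n\<bar> * real_of_int \<bar>k\<bar> / (cmod (hatn a) * cmod (hatn b))"
    by (simp add: norm_mult norm_divide)
  also have "\<dots> \<le> 2 * real_of_int \<bar>n\<bar> * cmod (hatn a) / (cmod (hatn a) * cmod (hatn b))"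
    using k pos by (intro divide_right_mono mult_left_mono) auto
  also have "\<dots> = 2 * real_of_int \<bar>n\<bar> * (1 / cmod (hatn b))"
    using pos by simp
  also have "\<dots> \<le> 2 * real_of_int \<bar>n\<bar> * (2 * jbr b powr (-1))"
    by (intro mult_left_mono inverse_norm_hatn_le) simp
  finally show ?thesis by simp
qed

lemma norm_m1t_le:
  assumes "n = n1 + n2 + n3"
  shows "cmod (m1t n n1 n2 n3) \<le> 4 * real_of_int \<bar>n\<bar> * jbr n2 powr (-1)"
proof (cases "(n1 + n2) * (n1 + n3) \<noteq> 0 \<and> n > 0 \<and> n2 + n3 < 0 \<and> n3 \<noteq> 0")
  case True
  \<comment> \<open>\<open>n\<close> and \<open>n\<^sub>2\<^sub>3\<close> have opposite signs and \<open>n\<^sub>1 = n - n\<^sub>2\<^sub>3\<close>.\<close>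
  hence "\<bar>n2 + n3\<bar> \<le> \<bar>n1\<bar>" using assms by arith
  moreover have "m1t n n1 n2 n3 = 2 * \<i> * of_int n * of_int (n2 + n3) / (hatn n1 * hatn n2)"
    using True by (simp add: m1t_def m1_def)
  ultimately show ?thesis by (simp only:) (rule norm_multiplier_le)
qed (auto simp: m1t_def m1_def)

lemma norm_m2_le:
  assumes "n = n1 + n2 + n3"
  shows "cmod (m2 n n1 n2 n3) \<le> 4 * real_of_int \<bar>n\<bar> * jbr n2 powr (-1)"
proof (cases "n < 0 \<and> n2 + n3 > 0 \<and> n3 \<noteq> 0")
  case True
  hence "\<bar>n2 + n3\<bar> \<le> \<bar>n1\<bar>" using assms by arith
  moreover have "m2 n n1 n2 n3 = 2 * \<i> * of_int n * of_int (n2 + n3) / (hatn n1 * hatn n2)"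
    using True by (simp add: m2_def)
  ultimately show ?thesis by (simp only:) (rule norm_multiplier_le)
qed (auto simp: m2_def)

lemma norm_m3_le: "cmod (m3 n n1 n2 n3) \<le> 4 * real_of_int \<bar>n\<bar> * jbr n1 powr (-1)"
proof -
  have "cmod (2 * \<i> * of_int n / hatn n1) = 2 * real_of_int \<bar>n\<bar> * (1 / cmod (hatn n1))"
    by (simp add: norm_mult norm_divide)
  also have "\<dots> \<le> 2 * real_of_int \<bar>n\<bar> * (2 * jbr n1 powr (-1))"
    by (intro mult_left_mono inverse_norm_hatn_le) simp
  finally show ?thesis unfolding m3_def by auto
qed

lemma ennreal_norm_NN_summand_le:
  fixes v :: "int \<Rightarrow> complex"
  assumes nn: "n = n1 + n2 + n3"
  defines "a \<equiv> \<lambda>k. ennreal (cmod (v k))" and "b \<equiv> \<lambda>k. ennreal (cmod (star v k))"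
  shows "ennreal (cmod (exp (\<i> * of_real t * of_int (Phi n n1 n2 n3)) *
      (m1t n n1 n2 n3 * v n1 * v n2 * star v n3
       + m2 n n1 n2 n3 * v n1 * star v n2 * v n3
       + m3 n n1 n2 n3 * star v n1 * v n2 * v n3)))
   \<le> ennreal (4 * real_of_int \<bar>n\<bar>) * (a n1 * (a n2 * jpow (-1) n2 * b n3)
      + a n1 * (b n2 * jpow (-1) n2 * a n3) + b n1 * jpow (-1) n1 * (a n2 * a n3))"
proof -
  define c where "c = ennreal (4 * real_of_int \<bar>n\<bar>)"
  have "cmod (exp (\<i> * of_real (t * of_int (Phi n n1 n2 n3)))) = 1" by (rule norm_exp_i_times)
  hence "cmod (exp (\<i> * of_real t * of_int (Phi n n1 n2 n3)) *
      (m1t n n1 n2 n3 * v n1 * v n2 * star v n3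
       + m2 n n1 n2 n3 * v n1 * star v n2 * v n3
       + m3 n n1 n2 n3 * star v n1 * v n2 * v n3))
    \<le> cmod (m1t n n1 n2 n3 * v n1 * v n2 * star v n3)
       + cmod (m2 n n1 n2 n3 * v n1 * star v n2 * v n3)
       + cmod (m3 n n1 n2 n3 * star v n1 * v n2 * v n3)"
    by (simp add: norm_mult[of "exp _"]
        order_trans[OF norm_triangle_ineq add_right_mono[OF norm_triangle_ineq]])
  hence "ennreal (cmod (exp (\<i> * of_real t * of_int (Phi n n1 n2 n3)) *
      (m1t n n1 n2 n3 * v n1 * v n2 * star v n3
       + m2 n n1 n2 n3 * v n1 * star v n2 * v n3
       + m3 n n1 n2 n3 * star v n1 * v n2 * v n3)))
    \<le> ennreal (cmod (m1t n n1 n2 n3)) * (a n1 * a n2 * b n3)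
      + ennreal (cmod (m2 n n1 n2 n3)) * (a n1 * b n2 * a n3)
      + ennreal (cmod (m3 n n1 n2 n3)) * (b n1 * a n2 * a n3)"
    by (auto dest!: ennreal_leI simp: a_def b_def norm_mult ennreal_mult mult.assoc)
  also have "\<dots> \<le> c * jpow (-1) n2 * (a n1 * a n2 * b n3)
      + c * jpow (-1) n2 * (a n1 * b n2 * a n3) + c * jpow (-1) n1 * (b n1 * a n2 * a n3)"
    unfolding c_def
    using norm_m1t_le[OF nn] norm_m2_le[OF nn] norm_m3_le[of n n1 n2 n3]
    by (intro add_mono mult_right_mono ennreal_le_mult_jpow) simp_all
  finally show ?thesis by (simp add: c_def distrib_left mult_ac)
qed

lemma ennreal_norm_NN_le:
  fixes w :: "real \<Rightarrow> int \<Rightarrow> complex" and t :: real and n :: int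
  defines "f \<equiv> \<lambda>k. ennreal (cmod (w t k))" and "fs \<equiv> \<lambda>k. ennreal (cmod (star (w t) k))"
  shows "ennreal (cmod (NN w t n)) \<le> ennreal (4 * real_of_int \<bar>n\<bar>) *
     (conv f (conv (\<lambda>q. f q * jpow (-1) q) fs) n + 2 * conv f (conv (\<lambda>q. fs q * jpow (-1) q) f) n)"
proof -
  define G where "G = (\<lambda>(n1, n2, n3). exp (\<i> * of_real t * of_int (Phi n n1 n2 n3)) *
      (m1t n n1 n2 n3 * w t n1 * w t n2 * star (w t) n3
       + m2 n n1 n2 n3 * w t n1 * star (w t) n2 * w t n3
       + m3 n n1 n2 n3 * star (w t) n1 * w t n2 * w t n3))"
  define T1 where "T1 p q = f p * (f q * jpow (-1) q * fs (n - p - q))" for p q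
  define T2 where "T2 p q = f p * (fs q * jpow (-1) q * f (n - p - q))" for p q
  define T3 where "T3 p q = fs p * jpow (-1) p * (f q * f (n - p - q))" for p q
  have summand: "ennreal (cmod (G (p, q, n - p - q))) \<le> ennreal (4 * real_of_int \<bar>n\<bar>) * (T1 p q + T2 p q + T3 p q)"
    for p q
    unfolding G_def prod.case T1_def T2_def T3_def f_def fs_def
    by (rule ennreal_norm_NN_summand_le) simp
  have "ennreal (cmod (NN w t n)) \<le> (\<integral>\<^sup>+z. cmod (G z) \<partial>count_space {(n1, n2, n3). n1 + n2 + n3 = n})"
    unfolding NN_def G_def[symmetric] by (rule ennreal_norm_infsum_le_nn_integral)
  also have "\<dots> = zsum (\<lambda>p. zsum (\<lambda>q. ennreal (cmod (G (p, q, n - p - q)))))"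
    by (rule nn_integral_sum3_eq_zsum_zsum)
  also have "\<dots> \<le> zsum (\<lambda>p. zsum (\<lambda>q. ennreal (4 * real_of_int \<bar>n\<bar>) * (T1 p q + T2 p q + T3 p q)))"
    by (intro zsum_mono summand)
  also have "\<dots> = ennreal (4 * real_of_int \<bar>n\<bar>)
      * (zsum (\<lambda>p. zsum (T1 p)) + zsum (\<lambda>p. zsum (T2 p)) + zsum (\<lambda>p. zsum (T3 p)))"
    by (simp add: zsum_cmult zsum_add)
  also have "zsum (\<lambda>p. zsum (T3 p)) = zsum (\<lambda>p. zsum (T2 p))"
  proof -
    have "T3 q p = T2 p q" for p q
      unfolding T2_def T3_def by (simp add: diff_diff_eq add.commute mult_ac)
    thus ?thesis by (subst zsum_swap) simp
  qed
  also have "zsum (\<lambda>p. zsum (T1 p)) = conv f (conv (\<lambda>q. f q * jpow (-1) q) fs) n"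
    by (simp add: T1_def conv_def zsum_cmult diff_diff_eq)
  also have "zsum (\<lambda>p. zsum (T2 p)) = conv f (conv (\<lambda>q. fs q * jpow (-1) q) f) n"
    by (simp add: T2_def conv_def zsum_cmult diff_diff_eq)
  finally show ?thesis by (simp add: mult_2 add.assoc)
qed

lemma jpow_norm_NN_sq_le:
  fixes w :: "real \<Rightarrow> int \<Rightarrow> complex" and t :: real and n :: int
  defines "f \<equiv> \<lambda>k. ennreal (cmod (w t k))" and "fs \<equiv> \<lambda>k. ennreal (cmod (star (w t) k))"
  shows "jpow (2 * e) n * (ennreal (cmod (NN w t n)))\<^sup>2
    \<le> 32 * (jpow (2 * (e + 1)) n * (conv f (conv (\<lambda>q. f q * jpow (-1) q) fs) n)\<^sup>2
      + 4 * (jpow (2 * (e + 1)) n * (conv f (conv (\<lambda>q. fs q * jpow (-1) q) f) n)\<^sup>2))"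
proof -
  define P1 where "P1 = conv f (conv (\<lambda>q. f q * jpow (-1) q) fs) n"
  define P2 where "P2 = conv f (conv (\<lambda>q. fs q * jpow (-1) q) f) n"
  have "(ennreal (cmod (NN w t n)))\<^sup>2 \<le> (ennreal (4 * real_of_int \<bar>n\<bar>) * (P1 + 2 * P2))\<^sup>2"
    using ennreal_norm_NN_le[of w t n] by (intro power_mono) (simp_all add: P1_def P2_def f_def fs_def)
  also have "\<dots> \<le> (ennreal (4 * real_of_int \<bar>n\<bar>))\<^sup>2 * (2 * (P1\<^sup>2 + 4 * P2\<^sup>2))"
    using ennreal_add_sq_le[of P1 "2 * P2"] by (simp add: power_mult_distrib mult_left_mono)
  finally have "jpow (2 * e) n * (ennreal (cmod (NN w t n)))\<^sup>2
      \<le> (jpow (2 * e) n * (ennreal (4 * real_of_int \<bar>n\<bar>))\<^sup>2) * (2 * (P1\<^sup>2 + 4 * P2\<^sup>2))"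
    by (simp add: mult_left_mono mult.assoc)
  also have "\<dots> \<le> (16 * jpow (2 * (e + 1)) n) * (2 * (P1\<^sup>2 + 4 * P2\<^sup>2))"
    using jpow_mult_sq_le[of e n] by (intro mult_right_mono) simp_all
  also have "\<dots> = (16 * 2) * (jpow (2 * (e + 1)) n * (P1\<^sup>2 + 4 * P2\<^sup>2))"
    by (simp only: mult_ac)
  finally show ?thesis by (simp add: P1_def P2_def distrib_left mult.left_commute)
qed

lemma l2s_sq_NN_le:
  assumes s: "0 < s" "s < 1/2"
  obtains K where "0 \<le> K" "\<And>w t. in_l2s s (w t) \<Longrightarrow>
    l2s_sq (2 * s - 3/2) (\<lambda>n. ennreal (cmod (NN w t n))) \<le> ennreal (K * (l2s_norm s (w t))^6)"
proof -
  obtain K where "0 \<le> K" and K: "\<And>a b c. l2s_sq s a < \<infinity> \<Longrightarrow> l2s_sq s b < \<infinity> \<Longrightarrow> l2s_sq s c < \<infinity> \<Longrightarrow>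
    l2s_sq (2 * s - 1/2) (conv a (conv (\<lambda>q. b q * jpow (-1) q) c))
      \<le> ennreal K * l2s_sq s a * l2s_sq s b * l2s_sq s c"
    using l2s_sq_trilinear_le[OF s] by blast
  have "l2s_sq (2 * s - 3/2) (\<lambda>n. ennreal (cmod (NN w t n))) \<le> ennreal (160 * K * (l2s_norm s (w t))^6)"
    if "in_l2s s (w t)" for w t
  proof -
    define f where "f = (\<lambda>k. ennreal (cmod (w t k)))"
    define fs where "fs = (\<lambda>k. ennreal (cmod (star (w t) k)))"
    define A where "A = ennreal ((l2s_norm s (w t))\<^sup>2)"
    have A: "l2s_sq s f = A" "l2s_sq s fs = A" "A < \<infinity>"
      using l2s_sq_norm_eq[OF that] l2s_sq_norm_star[of s "w t"] by (simp_all add: A_def f_def fs_def)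
    define P1 where "P1 = conv f (conv (\<lambda>q. f q * jpow (-1) q) fs)"
    define P2 where "P2 = conv f (conv (\<lambda>q. fs q * jpow (-1) q) f)"
    have P1: "l2s_sq (2 * s - 1/2) P1 \<le> ennreal K * A * A * A"
      using K[of f f fs] A unfolding P1_def by simp
    have P2: "l2s_sq (2 * s - 1/2) P2 \<le> ennreal K * A * A * A"
      using K[of f fs f] A unfolding P2_def by simp
    have pointwise: "jpow (2 * (2 * s - 3/2)) n * (ennreal (cmod (NN w t n)))\<^sup>2
        \<le> 32 * (jpow (2 * (2 * s - 1/2)) n * (P1 n)\<^sup>2 + 4 * (jpow (2 * (2 * s - 1/2)) n * (P2 n)\<^sup>2))"
      for n
      using jpow_norm_NN_sq_le[of "2 * s - 3/2" n w t] by (simp add: P1_def P2_def f_def fs_def)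
    have "l2s_sq (2 * s - 3/2) (\<lambda>n. ennreal (cmod (NN w t n)))
        \<le> 32 * (l2s_sq (2 * s - 1/2) P1 + 4 * l2s_sq (2 * s - 1/2) P2)"
      unfolding l2s_sq_def using pointwise
      by (simp add: zsum_mono zsum_cmult[symmetric] zsum_add[symmetric])
    also have "\<dots> \<le> 32 * (ennreal K * A * A * A + 4 * (ennreal K * A * A * A))"
      using P1 P2 by (intro mult_left_mono add_mono) simp_all
    also have "\<dots> = 160 * (ennreal K * A * A * A)"
    proof -
      have "E + 4 * E = (1 + 4) * E" for E :: ennreal by (simp only: distrib_right mult_1)
      thus ?thesis by (simp only:) (simp add: mult.assoc[symmetric])
    qed
    also have "\<dots> = 160 * ennreal (K * (l2s_norm s (w t))^6)"
      using \<open>0 \<le> K\<close> by (simp add: A_def ennreal_mult[symmetric] power_add[symmetric] mult.assoc)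
    also have "\<dots> = ennreal (160 * K * (l2s_norm s (w t))^6)"
      using \<open>0 \<le> K\<close> by (simp add: ennreal_mult mult.assoc)
    finally show ?thesis .
  qed
  with \<open>0 \<le> K\<close> show ?thesis by (intro that[of "160 * K"]) auto
qed

theorem mainTheorem5:
  fixes s :: real
  assumes "0 < s" and "s < 1/2"
  shows "\<exists>C::real. \<forall>T::real. \<forall>w :: real \<Rightarrow> int \<Rightarrow> complex.
           T > 0 \<longrightarrow>
           (\<forall>t\<in>{0..T}. in_l2s s (w t)) \<longrightarrow>
           (\<forall>t0\<in>{0..T}. ((\<lambda>t. l2s_norm s (\<lambda>n. w t n - w t0 n)) \<longlongrightarrow> 0) (at t0 within {0..T})) \<longrightarrow>
           (\<forall>t\<in>{0..T}. in_l2s (2 * s - 3 / 2) (NN w t) \<and>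
                         l2s_norm (2 * s - 3 / 2) (NN w t) \<le> C * (l2s_norm s (w t))^3)"
proof -
  \<comment> \<open>The estimate holds at each time separately.\<close>
  obtain K where "0 \<le> K" and K: "\<And>w t. in_l2s s (w t) \<Longrightarrow>
    l2s_sq (2 * s - 3/2) (\<lambda>n. ennreal (cmod (NN w t n))) \<le> ennreal (K * (l2s_norm s (w t))^6)"
    using l2s_sq_NN_le[OF assms] by blast
  have "in_l2s (2 * s - 3/2) (NN w t) \<and> l2s_norm (2 * s - 3/2) (NN w t) \<le> sqrt K * (l2s_norm s (w t))^3"
    if "in_l2s s (w t)" for w t
  proof -
    have "0 \<le> l2s_norm s (w t)" by (simp add: l2s_norm_def infsum_nonneg)
    hence "sqrt ((l2s_norm s (w t))^6) = (l2s_norm s (w t))^3"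
      using real_sqrt_abs[of "(l2s_norm s (w t))^3"] by simp
    hence "sqrt (K * (l2s_norm s (w t))^6) = sqrt K * (l2s_norm s (w t))^3"
      by (simp add: real_sqrt_mult)
    thus ?thesis using in_l2s_norm_le_of_l2s_sq_le[OF K[of w t, OF that]] \<open>0 \<le> K\<close> by simp
  qed
  thus ?thesis by (intro exI[of _ "sqrt K"]) auto
qed

end
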